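(* Let $G$ be a Polish group and let $\varphi\colon G \to [0,\infty]$ be a Baire measurable function which is not meagre (in the sense below). Then $(\varphi \diamond \varphi^{\diamond-1})^\circ(1_G) = 0$.
   Context: For functions $\varphi,\psi\colon G\to[0,\infty]$: $\varphi^{\diamond-1}(x) = \varphi(x^{-1})$ and $(\varphi \diamond \psi)(x) = \inf_{h \in G}\bigl(\varphi(h) + \psi(h^{-1}x)\bigr)$. A function $\varphi\colon G \to [0,\infty]$ is called meagre if there exists $r > 0$ such that $\{x \colon \varphi(x) < r\}$ is a meagre subset of $G$. The interior $\varphi^\circ$ of $\varphi$ is the function $\varphi^\circ(x) = \limsup_{y \to x} \varphi(y)$ (the least upper semi-continuous function which is pointwise $\geq \varphi$). *)

theory Defs
  imports "HOL-Analysis.Analysis"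
begin

text \<open>A Polish group is modelled as a type of class polish_space carrying a
  (not necessarily commutative) group structure, written additively
  (group_add: 0 is the identity, -x the inverse, x + y the product),
  such that multiplication and inversion are continuous.\<close>

definition topological_group_add :: "'a::{topological_space, group_add} itself \<Rightarrow> bool" where
  "topological_group_add _ \<longleftrightarrow>
     continuous_on UNIV (\<lambda>p::'a \<times> 'a. fst p + snd p) \<and> continuous_on UNIV (\<lambda>x::'a. - x)"

definition nowhere_dense :: "'a::topological_space set \<Rightarrow> bool" where
  "nowhere_dense S \<longleftrightarrow> interior (closure S) = {}"

definition meagre :: "'a::topological_space set \<Rightarrow> bool" where
  "meagre S \<longleftrightarrow> (\<exists>\<F>. countable \<F> \<and> (\<forall>T\<in>\<F>. nowhere_dense T) \<and> S = \<Union>\<F>)"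

definition baire_property :: "'a::topological_space set \<Rightarrow> bool" where
  "baire_property S \<longleftrightarrow> (\<exists>U. open U \<and> meagre ((S - U) \<union> (U - S)))"

definition baire_measurable :: "('a::topological_space \<Rightarrow> 'b::topological_space) \<Rightarrow> bool" where
  "baire_measurable f \<longleftrightarrow> (\<forall>V. open V \<longrightarrow> baire_property (f -` V))"

definition meagre_fun :: "('a::topological_space \<Rightarrow> ennreal) \<Rightarrow> bool" where
  "meagre_fun \<phi> \<longleftrightarrow> (\<exists>r>0. meagre {x. \<phi> x < r})"

definition conv_inv :: "('a::group_add \<Rightarrow> ennreal) \<Rightarrow> 'a \<Rightarrow> ennreal" where
  "conv_inv \<phi> x = \<phi> (- x)"

definition inf_conv :: "('a::group_add \<Rightarrow> ennreal) \<Rightarrow> ('a \<Rightarrow> ennreal) \<Rightarrow> 'a \<Rightarrow> ennreal" where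
  "inf_conv \<phi> \<psi> x = (INF h. \<phi> h + \<psi> (- h + x))"

text \<open>Interior: limsup at x (including x itself), i.e. least usc majorant.\<close>
definition usc_interior :: "('a::topological_space \<Rightarrow> ennreal) \<Rightarrow> 'a \<Rightarrow> ennreal" where
  "usc_interior \<phi> x = (INF U\<in>{U. open U \<and> x \<in> U}. SUP y\<in>U. \<phi> y)"

end

theory Submission
  imports Defs
begin

text \<open>For \<open>r > 0\<close> the sublevel set \<open>A = {\<phi> < r}\<close> has the Baire property and is
  not meagre, so it agrees with a nonempty open set \<open>U\<close> up to a meagre set. Pettis'
  argument then gives a neighbourhood \<open>N\<close> of the identity such that \<open>A\<close> meets
  \<open>y + A\<close> for every \<open>y \<in> N\<close>: otherwise the nonempty open set \<open>(y + U) \<inter> U\<close> would be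
  meagre, contradicting the Baire category theorem. A point \<open>h \<in> A \<inter> (y + A)\<close> witnesses
  \<open>(\<phi> \<diamond> \<phi>\<^sup>\<diamond>\<^sup>-\<^sup>1)(y) \<le> \<phi>(h) + \<phi>(-y + h) < 2r\<close> on all of \<open>N\<close>.\<close>

lemma continuous_on_add_topological_group:
  fixes f g :: "'b::topological_space \<Rightarrow> 'a::{topological_space, group_add}"
  assumes "topological_group_add TYPE('a)" "continuous_on S f" "continuous_on S g"
  shows "continuous_on S (\<lambda>x. f x + g x)"
proof -
  have "continuous_on UNIV (\<lambda>p::'a \<times> 'a. fst p + snd p)"
    using assms(1) unfolding topological_group_add_def by blast
  from continuous_on_compose2[OF this continuous_on_Pair[OF assms(2,3)]] show ?thesis
    by simp
qed

lemma homeomorphic_map_add_left: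
  fixes y :: "'a::{topological_space, group_add}"
  assumes "topological_group_add TYPE('a)"
  shows "homeomorphic_map euclidean euclidean ((+) y)"
proof (rule homeomorphic_maps_imp_map)
  show "homeomorphic_maps euclidean euclidean ((+) y) ((+) (- y))"
    unfolding homeomorphic_maps_def
    by (auto intro!: continuous_on_add_topological_group[OF assms] continuous_intros
             simp: add.assoc[symmetric])
qed

lemma nowhere_dense_homeomorphic_image:
  assumes "homeomorphic_map euclidean euclidean f" "nowhere_dense T"
  shows "nowhere_dense (f ` T)"
  using assms homeomorphic_map_closure_of[OF assms(1), of T]
    homeomorphic_map_interior_of[OF assms(1), of "closure T"]
  by (simp add: nowhere_dense_def)

lemma meagre_homeomorphic_image:
  assumes "homeomorphic_map euclidean euclidean f" "meagre M"
  shows "meagre (f ` M)"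
proof -
  obtain \<F> where "countable \<F>" "\<forall>T\<in>\<F>. nowhere_dense T" "M = \<Union>\<F>"
    using assms(2) unfolding meagre_def by blast
  then show ?thesis
    unfolding meagre_def
    by (intro exI[of _ "(`) f ` \<F>"]) (auto intro: nowhere_dense_homeomorphic_image[OF assms(1)])
qed

lemma nowhere_dense_subset: "nowhere_dense T \<Longrightarrow> S \<subseteq> T \<Longrightarrow> nowhere_dense S"
  unfolding nowhere_dense_def by (metis closure_mono interior_mono subset_empty)

lemma meagre_subset:
  assumes "meagre M" "S \<subseteq> M"
  shows "meagre S"
proof -
  obtain \<F> where "countable \<F>" "\<forall>T\<in>\<F>. nowhere_dense T" "M = \<Union>\<F>"
    using assms(1) unfolding meagre_def by blast
  with assms(2) show ?thesis
    unfolding meagre_def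
    by (intro exI[of _ "(\<lambda>T. T \<inter> S) ` \<F>"]) (auto intro: nowhere_dense_subset)
qed

lemma meagre_Un:
  assumes "meagre M" "meagre N"
  shows "meagre (M \<union> N)"
proof -
  obtain \<F> where "countable \<F>" "\<forall>T\<in>\<F>. nowhere_dense T" "M = \<Union>\<F>"
    using assms(1) unfolding meagre_def by blast
  moreover obtain \<G> where "countable \<G>" "\<forall>T\<in>\<G>. nowhere_dense T" "N = \<Union>\<G>"
    using assms(2) unfolding meagre_def by blast
  ultimately show ?thesis
    unfolding meagre_def by (intro exI[of _ "\<F> \<union> \<G>"]) auto
qed

lemma open_nonempty_not_meagre:
  fixes U :: "'a::complete_space set"
  assumes "open U" "U \<noteq> {}"
  shows "\<not> meagre U"
proof
  assume "meagre U"
  then obtain \<F> where \<F>: "countable \<F>" "\<forall>T\<in>\<F>. nowhere_dense T" "U = \<Union>\<F>"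
    unfolding meagre_def by blast
  have "euclidean interior_of \<Union>(closure ` \<F>) = ({}::'a set)"
    by (rule Baire_category_alt) (use completely_metrizable_space_euclidean \<F> in
        \<open>auto simp: nowhere_dense_def\<close>)
  moreover have "U \<subseteq> interior (\<Union>(closure ` \<F>))"
    using \<F>(3) assms(1) closure_subset by (metis Sup_mono imageI interior_maximal)
  ultimately show False
    using assms(2) by auto
qed

lemma baire_property_nonmeagre_translates_meet:
  fixes A :: "'a::{complete_space, group_add} set"
  assumes tg: "topological_group_add TYPE('a)"
    and "baire_property A" "\<not> meagre A"
  obtains N where "open N" "0 \<in> N" "\<And>y. y \<in> N \<Longrightarrow> \<exists>h\<in>A. - y + h \<in> A"
proof -
  obtain U where U: "open U" "meagre ((A - U) \<union> (U - A))"
    using assms(2) unfolding baire_property_def by blast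
  then have "U \<noteq> {}" and UA: "meagre (U - A)"
    using assms(3) meagre_subset by auto
  then obtain u where u: "u \<in> U" by blast
  define N where "N = (\<lambda>y. y + u) -` U"
  have "open N"
    unfolding N_def
    by (intro open_vimage U(1) continuous_on_add_topological_group[OF tg] continuous_intros)
  moreover have "0 \<in> N"
    using u by (simp add: N_def)
  moreover have "\<exists>h\<in>A. - y + h \<in> A" if "y \<in> N" for y
  proof (rule ccontr)
    assume disjoint: "\<not> (\<exists>h\<in>A. - y + h \<in> A)"
    define W where "W = (+) y ` U \<inter> U"
    have hom: "homeomorphic_map euclidean euclidean ((+) y)"
      by (rule homeomorphic_map_add_left[OF tg])
    have "W \<subseteq> (+) y ` (U - A) \<union> (U - A)"
      using disjoint by (auto simp: W_def add.assoc[symmetric])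
    then have "meagre W"
      using meagre_subset meagre_Un meagre_homeomorphic_image[OF hom UA] UA by blast
    moreover have "open W"
      unfolding W_def using U(1) homeomorphic_map_openness_eq[OF hom] by auto
    moreover have "y + u \<in> W"
      using \<open>y \<in> N\<close> u by (auto simp: W_def N_def)
    ultimately show False
      using open_nonempty_not_meagre by blast
  qed
  ultimately show ?thesis
    using that by blast
qed

lemma baire_property_sublevel:
  fixes \<phi> :: "'a::topological_space \<Rightarrow> 'b::linorder_topology"
  assumes "baire_measurable \<phi>"
  shows "baire_property {x. \<phi> x < r}"
proof -
  have "{x. \<phi> x < r} = \<phi> -` {..<r}"
    by auto
  with assms show ?thesis
    unfolding baire_measurable_def by (simp add: open_lessThan)
qed

lemma inf_conv_conv_inv_le:
  fixes \<phi> :: "'a::group_add \<Rightarrow> ennreal"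
  shows "inf_conv \<phi> (conv_inv \<phi>) y \<le> \<phi> h + \<phi> (- y + h)"
proof -
  have "inf_conv \<phi> (conv_inv \<phi>) y \<le> \<phi> h + conv_inv \<phi> (- h + y)"
    unfolding inf_conv_def by (rule INF_lower) simp
  also have "\<dots> = \<phi> h + \<phi> (- y + h)"
    by (simp add: conv_inv_def minus_add)
  finally show ?thesis .
qed

lemma usc_interior_le_nbhd:
  assumes "open N" "x \<in> N" "\<And>y. y \<in> N \<Longrightarrow> f y \<le> c"
  shows "usc_interior f x \<le> c"
proof -
  have "usc_interior f x \<le> (SUP y\<in>N. f y)"
    unfolding usc_interior_def by (rule INF_lower) (use assms(1,2) in simp)
  also have "\<dots> \<le> c"
    by (rule SUP_least) (rule assms(3))
  finally show ?thesis .
qed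

theorem lemma3p6:
  fixes \<phi> :: "'a::{polish_space, group_add} \<Rightarrow> ennreal"
  assumes "topological_group_add TYPE('a)"
    and "baire_measurable \<phi>"
    and "\<not> meagre_fun \<phi>"
  shows "usc_interior (inf_conv \<phi> (conv_inv \<phi>)) 0 = 0"
proof -
  have bound: "usc_interior (inf_conv \<phi> (conv_inv \<phi>)) 0 \<le> ennreal e" if "e > 0" for e :: real
  proof -
    define A where "A = {x. \<phi> x < ennreal (e / 2)}"
    have "ennreal (e / 2) > 0"
      using \<open>e > 0\<close> by simp
    then have "\<not> meagre A"
      using assms(3) unfolding A_def meagre_fun_def by blast
    moreover have "baire_property A"
      unfolding A_def by (rule baire_property_sublevel[OF assms(2)])
    ultimately obtain N where N: "open N" "0 \<in> N" "\<And>y. y \<in> N \<Longrightarrow> \<exists>h\<in>A. - y + h \<in> A"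
      using baire_property_nonmeagre_translates_meet[OF assms(1)] by metis
    have "inf_conv \<phi> (conv_inv \<phi>) y \<le> ennreal e" if "y \<in> N" for y
    proof -
      obtain h where "\<phi> h < ennreal (e / 2)" "\<phi> (- y + h) < ennreal (e / 2)"
        using N(3)[OF \<open>y \<in> N\<close>] by (auto simp: A_def)
      then have "\<phi> h + \<phi> (- y + h) \<le> ennreal (e / 2) + ennreal (e / 2)"
        by (intro add_mono) auto
      also have "\<dots> = ennreal e"
        using \<open>e > 0\<close> by (simp flip: ennreal_plus)
      finally show ?thesis
        using inf_conv_conv_inv_le order_trans by blast
    qed
    with N(1,2) show ?thesis
      by (rule usc_interior_le_nbhd)
  qed
  have "usc_interior (inf_conv \<phi> (conv_inv \<phi>)) 0 \<le> 0"
    by (rule ennreal_le_epsilon) (use bound in simp)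
  then show ?thesis
    by simp
qed

end
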